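(* Let $(V_1,\dots,V_n)$ be an $n$-tuple of doubly non-commuting isometries on $H$. (1) Let $A\ne B$ be subsets of $\{1,\dots,n\}$ and let $L_A,L_B$ be subspaces reducing all $V_1,\dots,V_n$ such that $V_i|_{L_A}$ is a pure isometry for $i\in A$ and unitary for $i\in A^c$, and $V_i|_{L_B}$ is a pure isometry for $i\in B$ and unitary for $i\in B^c$. Then $L_A\perp L_B$. (2) Suppose that for each $A\subseteq\{1,\dots,n\}$, $L_A$ is a subspace reducing all $V_1,\dots,V_n$ such that $V_i|_{L_A}$ is a pure isometry for $i\in A$ and unitary for $i\in A^c$. If $H=\bigoplus_{A}L_A$ algebraically, then $L_A=H_A$ for all $A$.
   Context: Fix $n\ge1$ and $z_{ij}\in\mathbb T$ ($i\ne j$) with $z_{ji}=\overline{z_{ij}}$; $(V_1,\dots,V_n)$ is doubly non-commuting if the $V_i$ are isometries with $V_i^*V_j=\overline{z_{ij}}V_jV_i^*$ for $i\ne j$. Subspaces are closed; $A^c$ is the complement in $\{1,\dots,n\}$. For an isometry $S$ and an $S$-invariant subspace $L$, $S|_L$ is a pure isometry if $\{0\}$ is the only $S$-invariant subspace of $L$ on which $S$ is unitary. $H^{\mathrm{iso}}(S)=\bigoplus_{k\ge0}S^k(\ker S^* )$, $H^{\mathrm{uni}}(S)=\bigcap_{k\ge0}S^k(H)$, and $H_A=\bigcap_{i\in A}H^{\mathrm{iso}}(V_i)\cap\bigcap_{i\in A^c}H^{\mathrm{uni}}(V_i)$ (empty intersection $=H$). *)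

theory Defs
  imports "HOL-Analysis.Analysis"
begin

text \<open>A complex Hilbert space is modelled on a type 'h with its additive group
structure, together with an explicit complex scalar multiplication sc and an inner
product ip (linear in the first, conjugate-linear in the second argument).\<close>

definition hnorm :: "('h \<Rightarrow> 'h \<Rightarrow> complex) \<Rightarrow> 'h \<Rightarrow> real" where
  "hnorm ip x = sqrt (Re (ip x x))"

definition hconv :: "('h::ab_group_add \<Rightarrow> 'h \<Rightarrow> complex) \<Rightarrow> (nat \<Rightarrow> 'h) \<Rightarrow> 'h \<Rightarrow> bool" where
  "hconv ip f x \<longleftrightarrow> (\<lambda>k. hnorm ip (f k - x)) \<longlonglongrightarrow> 0"

definition hcauchy :: "('h::ab_group_add \<Rightarrow> 'h \<Rightarrow> complex) \<Rightarrow> (nat \<Rightarrow> 'h) \<Rightarrow> bool" where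
  "hcauchy ip f \<longleftrightarrow> (\<forall>e>0. \<exists>N. \<forall>m\<ge>N. \<forall>k\<ge>N. hnorm ip (f m - f k) < e)"

definition hilbert_space :: "(complex \<Rightarrow> 'h::ab_group_add \<Rightarrow> 'h) \<Rightarrow> ('h \<Rightarrow> 'h \<Rightarrow> complex) \<Rightarrow> bool" where
  "hilbert_space sc ip \<longleftrightarrow>
     (\<forall>a x y. sc a (x + y) = sc a x + sc a y) \<and>
     (\<forall>a b x. sc (a + b) x = sc a x + sc b x) \<and>
     (\<forall>a b x. sc (a * b) x = sc a (sc b x)) \<and>
     (\<forall>x. sc 1 x = x) \<and>
     (\<forall>x y z. ip (x + y) z = ip x z + ip y z) \<and>
     (\<forall>a x y. ip (sc a x) y = a * ip x y) \<and>
     (\<forall>x y. ip y x = cnj (ip x y)) \<and>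
     (\<forall>x. Im (ip x x) = 0 \<and> Re (ip x x) \<ge> 0) \<and>
     (\<forall>x. ip x x = 0 \<longrightarrow> x = 0) \<and>
     (\<forall>f. hcauchy ip f \<longrightarrow> (\<exists>x. hconv ip f x))"

definition closed_subspace :: "(complex \<Rightarrow> 'h::ab_group_add \<Rightarrow> 'h) \<Rightarrow> ('h \<Rightarrow> 'h \<Rightarrow> complex) \<Rightarrow> 'h set \<Rightarrow> bool" where
  "closed_subspace sc ip M \<longleftrightarrow>
     0 \<in> M \<and> (\<forall>x\<in>M. \<forall>y\<in>M. x + y \<in> M) \<and> (\<forall>a. \<forall>x\<in>M. sc a x \<in> M) \<and>
     (\<forall>f x. (\<forall>k. f k \<in> M) \<and> hconv ip f x \<longrightarrow> x \<in> M)"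

definition hlinear :: "(complex \<Rightarrow> 'h::ab_group_add \<Rightarrow> 'h) \<Rightarrow> ('h \<Rightarrow> 'h) \<Rightarrow> bool" where
  "hlinear sc T \<longleftrightarrow> (\<forall>x y. T (x + y) = T x + T y) \<and> (\<forall>a x. T (sc a x) = sc a (T x))"

definition isometry :: "(complex \<Rightarrow> 'h::ab_group_add \<Rightarrow> 'h) \<Rightarrow> ('h \<Rightarrow> 'h \<Rightarrow> complex) \<Rightarrow> ('h \<Rightarrow> 'h) \<Rightarrow> bool" where
  "isometry sc ip V \<longleftrightarrow> hlinear sc V \<and> (\<forall>x. hnorm ip (V x) = hnorm ip x)"

definition is_adjoint :: "('h \<Rightarrow> 'h \<Rightarrow> complex) \<Rightarrow> ('h \<Rightarrow> 'h) \<Rightarrow> ('h \<Rightarrow> 'h) \<Rightarrow> bool" where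
  "is_adjoint ip V W \<longleftrightarrow> (\<forall>x y. ip (V x) y = ip x (W y))"

definition doubly_noncommuting ::
  "(complex \<Rightarrow> 'h::ab_group_add \<Rightarrow> 'h) \<Rightarrow> ('h \<Rightarrow> 'h \<Rightarrow> complex) \<Rightarrow> nat \<Rightarrow> (nat \<Rightarrow> nat \<Rightarrow> complex)
    \<Rightarrow> (nat \<Rightarrow> 'h \<Rightarrow> 'h) \<Rightarrow> (nat \<Rightarrow> 'h \<Rightarrow> 'h) \<Rightarrow> bool" where
  "doubly_noncommuting sc ip n z V W \<longleftrightarrow>
     (\<forall>i\<in>{1..n}. isometry sc ip (V i) \<and> is_adjoint ip (V i) (W i)) \<and>
     (\<forall>i\<in>{1..n}. \<forall>j\<in>{1..n}. i \<noteq> j \<longrightarrow>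
        cmod (z i j) = 1 \<and> z j i = cnj (z i j) \<and>
        (\<forall>x. W i (V j x) = sc (cnj (z i j)) (V j (W i x))))"

definition reducing :: "(complex \<Rightarrow> 'h::ab_group_add \<Rightarrow> 'h) \<Rightarrow> ('h \<Rightarrow> 'h \<Rightarrow> complex) \<Rightarrow> ('h \<Rightarrow> 'h) \<Rightarrow> ('h \<Rightarrow> 'h) \<Rightarrow> 'h set \<Rightarrow> bool" where
  "reducing sc ip V W L \<longleftrightarrow> closed_subspace sc ip L \<and> V ` L \<subseteq> L \<and> W ` L \<subseteq> L"

text \<open>For an isometry S and S-invariant L: S|_L is unitary iff S maps L onto L.\<close>
definition unitary_on :: "('h \<Rightarrow> 'h) \<Rightarrow> 'h set \<Rightarrow> bool" where
  "unitary_on S L \<longleftrightarrow> S ` L = L"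

definition pure_on :: "(complex \<Rightarrow> 'h::ab_group_add \<Rightarrow> 'h) \<Rightarrow> ('h \<Rightarrow> 'h \<Rightarrow> complex) \<Rightarrow> ('h \<Rightarrow> 'h) \<Rightarrow> 'h set \<Rightarrow> bool" where
  "pure_on sc ip S L \<longleftrightarrow> S ` L \<subseteq> L \<and>
     (\<forall>K. closed_subspace sc ip K \<and> K \<subseteq> L \<and> S ` K \<subseteq> K \<and> unitary_on S K \<longrightarrow> K = {0})"

definition horth :: "('h \<Rightarrow> 'h \<Rightarrow> complex) \<Rightarrow> 'h set \<Rightarrow> 'h set \<Rightarrow> bool" where
  "horth ip M N \<longleftrightarrow> (\<forall>x\<in>M. \<forall>y\<in>N. ip x y = 0)"

definition hclosure :: "('h::ab_group_add \<Rightarrow> 'h \<Rightarrow> complex) \<Rightarrow> 'h set \<Rightarrow> 'h set" where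
  "hclosure ip M = {x. \<exists>f. (\<forall>k. f k \<in> M) \<and> hconv ip f x}"

text \<open>H^iso(S) = closed orthogonal sum of the S^k(ker S^*), i.e. the closure of the
(algebraic) sum of these subspaces.\<close>
definition H_iso :: "('h::ab_group_add \<Rightarrow> 'h \<Rightarrow> complex) \<Rightarrow> ('h \<Rightarrow> 'h) \<Rightarrow> ('h \<Rightarrow> 'h) \<Rightarrow> 'h set" where
  "H_iso ip S Sadj = hclosure ip
     {x. \<exists>N g. (\<forall>k<N. g k \<in> (S ^^ k) ` {y. Sadj y = 0}) \<and> x = (\<Sum>k<N. g k)}"

definition H_uni :: "('h \<Rightarrow> 'h) \<Rightarrow> 'h set" where
  "H_uni S = (\<Inter>k. (S ^^ k) ` UNIV)"

definition H_A :: "('h::ab_group_add \<Rightarrow> 'h \<Rightarrow> complex) \<Rightarrow> nat \<Rightarrow> (nat \<Rightarrow> 'h \<Rightarrow> 'h) \<Rightarrow> (nat \<Rightarrow> 'h \<Rightarrow> 'h) \<Rightarrow> nat set \<Rightarrow> 'h set" where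
  "H_A ip n V W A = {x. (\<forall>i\<in>A. x \<in> H_iso ip (V i) (W i)) \<and> (\<forall>i\<in>{1..n} - A. x \<in> H_uni (V i))}"

definition type_A_subspace ::
  "(complex \<Rightarrow> 'h::ab_group_add \<Rightarrow> 'h) \<Rightarrow> ('h \<Rightarrow> 'h \<Rightarrow> complex) \<Rightarrow> nat \<Rightarrow> (nat \<Rightarrow> 'h \<Rightarrow> 'h) \<Rightarrow> (nat \<Rightarrow> 'h \<Rightarrow> 'h)
    \<Rightarrow> nat set \<Rightarrow> 'h set \<Rightarrow> bool" where
  "type_A_subspace sc ip n V W A L \<longleftrightarrow>
     (\<forall>i\<in>{1..n}. reducing sc ip (V i) (W i) L) \<and>
     (\<forall>i\<in>A. pure_on sc ip (V i) L) \<and> (\<forall>i\<in>{1..n} - A. unitary_on (V i) L)"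

end

(* Everything reduces to a single isometry V with adjoint W. The vectors fixed by all the
   projections V^k W^k onto the ranges of V^k form H_uni V. If L reduces V and V|L is pure,
   the orthogonal projection onto L commutes with V and W, so it maps H_uni V into
   L \<inter> H_uni V, a subspace on which V is unitary; purity makes that subspace zero, hence
   H_uni V is orthogonal to L. A vector orthogonal to all wandering subspaces V^k(ker W) lies
   in H_uni V, so projecting y \<in> L onto H_iso V leaves a remainder that is orthogonal both to
   L and to H_iso V, i.e. zero: L \<subseteq> H_iso V. Together with H_iso V \<perp> H_uni V and
   "unitary parts lie in H_uni V", a type-A subspace lies in H_A, and H_A \<perp> H_B for A \<noteq> B
   (an index in the symmetric difference is isometric on one side and unitary on the other).
   This gives (1), and in a decomposition H = \<Sum> L_B every component of x \<in> H_A other than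
   the one in L_A is orthogonal to itself, which gives (2). *)

theory Submission
  imports Defs
begin

section \<open>Complex Hilbert spaces\<close>

locale complex_hilbert =
  fixes sc :: "complex \<Rightarrow> 'h::ab_group_add \<Rightarrow> 'h" and ip :: "'h \<Rightarrow> 'h \<Rightarrow> complex"
  assumes hilbert: "hilbert_space sc ip"
begin

sublocale module sc
proof
  show "sc a (x + y) = sc a x + sc a y" "sc (a + b) x = sc a x + sc b x" "sc 1 x = x" for a b x y
    using hilbert unfolding hilbert_space_def by (elim conjE; metis)+
  show "sc a (sc b x) = sc (a * b) x" for a b x
    using hilbert unfolding hilbert_space_def by (elim conjE) metis
qed

lemma ip_add_left: "ip (x + y) z = ip x z + ip y z"
  using hilbert unfolding hilbert_space_def by (elim conjE) metis

lemma ip_scale_left: "ip (sc a x) y = a * ip x y"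
  using hilbert unfolding hilbert_space_def by (elim conjE) metis

lemma ip_commute: "ip y x = cnj (ip x y)"
  using hilbert unfolding hilbert_space_def by (elim conjE) metis

lemma Im_ip_self [simp]: "Im (ip x x) = 0"
  using hilbert unfolding hilbert_space_def by (elim conjE) metis

lemma Re_ip_self_nonneg: "0 \<le> Re (ip x x)"
  using hilbert unfolding hilbert_space_def by (elim conjE) metis

lemma complete: "hcauchy ip f \<Longrightarrow> \<exists>x. hconv ip f x"
  using hilbert unfolding hilbert_space_def by (elim conjE) metis

lemma additive_ip_left: "Modules.additive (\<lambda>x. ip x y)"
  by unfold_locales (rule ip_add_left)

lemma additive_ip_right: "Modules.additive (\<lambda>y. ip x y)"
proof
  show "ip x (y + z) = ip x y + ip x z" for y z
    using ip_commute[of x "y + z"] ip_commute[of x y] ip_commute[of x z] ip_add_left[of y z x]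
    by simp
qed

lemmas ip_zero_left [simp] = additive.zero[OF additive_ip_left]
lemmas ip_zero_right [simp] = additive.zero[OF additive_ip_right]
lemmas ip_diff_left = additive.diff[OF additive_ip_left]
lemmas ip_diff_right = additive.diff[OF additive_ip_right]
lemmas ip_sum_left = additive.sum[OF additive_ip_left]
lemmas ip_add_right = additive.add[OF additive_ip_right]

lemma ip_self_eq_0 [simp]: "ip x x = 0 \<longleftrightarrow> x = 0"
proof
  show "x = 0" if "ip x x = 0"
    using hilbert that unfolding hilbert_space_def by (elim conjE) metis
qed simp

lemma ip_ext: "(\<And>z. ip z a = ip z b) \<Longrightarrow> a = b"
  by (metis eq_iff_diff_eq_0 ip_diff_right ip_self_eq_0)

lemma ip_sum_orthogonal_component:
  assumes "finite I" and "i \<in> I" and "\<And>j. j \<in> I \<Longrightarrow> j \<noteq> i \<Longrightarrow> ip (f j) (f i) = 0"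
  shows "ip (\<Sum>j\<in>I. f j) (f i) = ip (f i) (f i)"
proof -
  have "ip (\<Sum>j\<in>I. f j) (f i) = ip (f i) (f i) + (\<Sum>j\<in>I - {i}. ip (f j) (f i))"
    using assms(1,2) by (simp add: ip_sum_left sum.remove ip_add_left)
  also have "(\<Sum>j\<in>I - {i}. ip (f j) (f i)) = 0"
    using assms(3) by (simp add: sum.neutral)
  finally show ?thesis
    by simp
qed

lemma ip_scale_right: "ip x (sc a y) = cnj a * ip x y"
  by (subst ip_commute) (simp add: ip_scale_left ip_commute[of x y])

lemma ip_self_of_real: "ip x x = complex_of_real (Re (ip x x))"
  by (simp add: complex_eq_iff)

lemma Re_ip_commute: "Re (ip y x) = Re (ip x y)"
  by (subst ip_commute) simp

lemma Re_ip_self_add: "Re (ip (x + y) (x + y)) = Re (ip x x) + 2 * Re (ip x y) + Re (ip y y)"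
  by (simp add: ip_add_left ip_add_right Re_ip_commute[of y x])

lemma Re_ip_self_diff: "Re (ip (x - y) (x - y)) = Re (ip x x) - 2 * Re (ip x y) + Re (ip y y)"
  by (simp add: ip_diff_left ip_diff_right Re_ip_commute[of y x])

lemma hnorm_nonneg: "0 \<le> hnorm ip x"
  by (simp add: hnorm_def Re_ip_self_nonneg)

lemma hnorm_power2: "(hnorm ip x)\<^sup>2 = Re (ip x x)"
  by (simp add: hnorm_def Re_ip_self_nonneg)

lemma hnorm_eq_0 [simp]: "hnorm ip x = 0 \<longleftrightarrow> x = 0"
proof
  assume "hnorm ip x = 0"
  then have "Re (ip x x) = 0"
    using hnorm_power2[of x] by simp
  then show "x = 0"
    using ip_self_of_real[of x] by simp
qed (simp add: hnorm_def)

lemma hnorm_zero [simp]: "hnorm ip 0 = 0"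
  by simp

lemma hnorm_minus_commute: "hnorm ip (x - y) = hnorm ip (y - x)"
  by (simp add: hnorm_def ip_diff_left ip_diff_right algebra_simps)

lemma Re_ip_self_scale: "Re (ip (sc a x) (sc a x)) = (cmod a)\<^sup>2 * Re (ip x x)"
proof -
  have "ip (sc a x) (sc a x) = (a * cnj a) * ip x x"
    by (simp add: ip_scale_left ip_scale_right)
  also have "a * cnj a = complex_of_real ((cmod a)\<^sup>2)"
    by (rule complex_norm_square[symmetric])
  finally have "ip (sc a x) (sc a x) = complex_of_real ((cmod a)\<^sup>2) * ip x x" .
  then show ?thesis
    by simp
qed

lemma hnorm_scale: "hnorm ip (sc a x) = cmod a * hnorm ip x"
  by (simp add: hnorm_def real_sqrt_mult Re_ip_self_scale)

lemma cauchy_schwarz: "cmod (ip x y) \<le> hnorm ip x * hnorm ip y"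
proof (cases "y = 0")
  case False
  define r where "r = Re (ip y y)"
  define c where "c = ip x y"
  have "r > 0"
    using False Re_ip_self_nonneg[of y] ip_self_of_real[of y] unfolding r_def
    by (metis ip_self_eq_0 less_eq_real_def of_real_0)
  define t where "t = c / complex_of_real r"
  have ip_t: "ip x (sc t y) = complex_of_real ((cmod c)\<^sup>2 / r)"
    by (simp add: ip_scale_right t_def c_def[symmetric] complex_mult_cnj cmod_power2 mult.commute)
  have norm_t: "Re (ip (sc t y) (sc t y)) = (cmod c)\<^sup>2 / r"
    using \<open>r > 0\<close> by (simp add: Re_ip_self_scale t_def norm_divide power_divide r_def[symmetric])
      (simp add: power2_eq_square)
  have "0 \<le> Re (ip (x - sc t y) (x - sc t y))"
    by (rule Re_ip_self_nonneg)
  also have "\<dots> = Re (ip x x) - (cmod c)\<^sup>2 / r"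
    by (simp add: Re_ip_self_diff ip_t norm_t)
  finally have "(cmod c)\<^sup>2 \<le> (hnorm ip x * hnorm ip y)\<^sup>2"
    using \<open>r > 0\<close> by (simp add: field_simps hnorm_power2 r_def)
  then show ?thesis
    unfolding c_def by (rule power2_le_imp_le) (simp add: hnorm_nonneg)
qed simp

lemma hnorm_triangle: "hnorm ip (x + y) \<le> hnorm ip x + hnorm ip y"
proof -
  have "Re (ip x y) \<le> hnorm ip x * hnorm ip y"
    using cauchy_schwarz[of x y] complex_Re_le_cmod[of "ip x y"] by linarith
  then have "(hnorm ip (x + y))\<^sup>2 \<le> (hnorm ip x + hnorm ip y)\<^sup>2"
    by (simp add: hnorm_power2 Re_ip_self_add power2_sum)
  then show ?thesis
    by (rule power2_le_imp_le) (simp add: hnorm_nonneg)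
qed

lemma hnorm_triangle_diff: "hnorm ip (x - z) \<le> hnorm ip (x - y) + hnorm ip (y - z)"
  using hnorm_triangle[of "x - y" "y - z"] by simp

lemma hnorm_diff_ge: "\<bar>hnorm ip x - hnorm ip y\<bar> \<le> hnorm ip (x - y)"
  using hnorm_triangle[of "x - y" y] hnorm_triangle[of "y - x" x] hnorm_minus_commute[of x y]
  by (simp add: abs_le_iff)

lemma hconv_lipschitz:
  assumes "hconv ip f x" and "\<And>a. hnorm ip (T a - T x) \<le> C * hnorm ip (a - x)"
  shows "hconv ip (\<lambda>k. T (f k)) (T x)"
proof -
  have "(\<lambda>k. C * hnorm ip (f k - x)) \<longlonglongrightarrow> 0"
    using assms(1) tendsto_mult_right_zero unfolding hconv_def by blast
  then show ?thesis
    unfolding hconv_def by (rule Lim_null_comparison[rotated]) (simp add: hnorm_nonneg assms(2))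
qed

lemma hconv_hnorm_diff:
  assumes "hconv ip f x"
  shows "(\<lambda>k. hnorm ip (c - f k)) \<longlonglongrightarrow> hnorm ip (c - x)"
proof -
  have "(\<lambda>k. hnorm ip (c - f k) - hnorm ip (c - x)) \<longlonglongrightarrow> 0"
  proof (rule Lim_null_comparison[rotated])
    show "(\<lambda>k. hnorm ip (f k - x)) \<longlonglongrightarrow> 0"
      using assms unfolding hconv_def .
    show "\<forall>\<^sub>F k in sequentially. norm (hnorm ip (c - f k) - hnorm ip (c - x)) \<le> hnorm ip (f k - x)"
      using hnorm_diff_ge[of "c - f _" "c - x"] hnorm_minus_commute[of x] by simp
  qed
  then show ?thesis
    by (rule LIM_zero_cancel)
qed

lemma hconv_ip_right:
  assumes "hconv ip f x"
  shows "(\<lambda>k. ip q (f k)) \<longlonglongrightarrow> ip q x"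
proof -
  have "(\<lambda>k. ip q (f k) - ip q x) \<longlonglongrightarrow> 0"
  proof (rule Lim_null_comparison[rotated])
    show "(\<lambda>k. hnorm ip q * hnorm ip (f k - x)) \<longlonglongrightarrow> 0"
      using assms tendsto_mult_right_zero unfolding hconv_def by blast
    show "\<forall>\<^sub>F k in sequentially. norm (ip q (f k) - ip q x) \<le> hnorm ip q * hnorm ip (f k - x)"
      by (simp flip: ip_diff_right add: cauchy_schwarz)
  qed
  then show ?thesis
    by (rule LIM_zero_cancel)
qed

lemma hconv_ip_left:
  assumes "hconv ip f x"
  shows "(\<lambda>k. ip (f k) q) \<longlonglongrightarrow> ip x q"
  using tendsto_cnj[OF hconv_ip_right[OF assms, of q]] by (simp flip: ip_commute)

lemma hconv_unique:
  assumes "hconv ip f x" and "hconv ip f y"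
  shows "x = y"
proof -
  have "(\<lambda>k. hnorm ip (f k - x) + hnorm ip (f k - y)) \<longlonglongrightarrow> 0 + 0"
    using assms unfolding hconv_def by (rule tendsto_add)
  moreover have "hnorm ip (x - y) \<le> hnorm ip (f k - x) + hnorm ip (f k - y)" for k
    using hnorm_triangle_diff[of x y "f k"] hnorm_minus_commute[of x "f k"] by simp
  ultimately have "hnorm ip (x - y) \<le> 0"
    by (intro LIMSEQ_le_const) auto
  then show "x = y"
    using hnorm_nonneg[of "x - y"] by simp
qed

lemma hclosure_subset: "closed_subspace sc ip L \<Longrightarrow> hclosure ip L \<subseteq> L"
  unfolding closed_subspace_def hclosure_def by blast

lemma hclosure_orthogonal:
  assumes "\<And>m. m \<in> M \<Longrightarrow> ip m u = 0" and "x \<in> hclosure ip M"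
  shows "ip x u = 0"
proof -
  obtain f where "\<And>k. f k \<in> M" and "hconv ip f x"
    using assms(2) unfolding hclosure_def by blast
  then have "(\<lambda>k. 0) \<longlonglongrightarrow> ip x u"
    using hconv_ip_left[of f x u] assms(1) by simp
  then show ?thesis
    using LIMSEQ_unique tendsto_const by blast
qed

subsection \<open>Orthogonal projections\<close>

lemma hnorm_scale_two: "hnorm ip (x + x) = 2 * hnorm ip x"
proof -
  have "x + x = sc 2 x"
    by (metis one_add_one scale_left_distrib scale_one)
  then show ?thesis
    by (simp add: hnorm_scale)
qed

lemma parallelogram:
  "(hnorm ip (x + y))\<^sup>2 + (hnorm ip (x - y))\<^sup>2 = 2 * (hnorm ip x)\<^sup>2 + 2 * (hnorm ip y)\<^sup>2"
  by (simp add: hnorm_power2 Re_ip_self_add Re_ip_self_diff)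

lemma minimizing_sequence_cauchy:
  assumes M: "subspace M" and mM: "\<And>j. m j \<in> M"
    and dist_ge: "\<And>u. u \<in> M \<Longrightarrow> d \<le> hnorm ip (y - u)"
    and lim: "(\<lambda>j. hnorm ip (y - m j)) \<longlonglongrightarrow> d"
  shows "hcauchy ip m"
proof -
  have "0 \<le> d"
    using lim by (rule LIMSEQ_le_const) (simp add: hnorm_nonneg)
  have bound: "(hnorm ip (m j - m l))\<^sup>2 \<le> 2 * (hnorm ip (y - m j))\<^sup>2 + 2 * (hnorm ip (y - m l))\<^sup>2 - 4 * d\<^sup>2"
    for j l
  proof -
    define mid where "mid = sc (1/2) (m j + m l)"
    have "mid \<in> M"
      unfolding mid_def using M mM by (simp add: subspace_add subspace_scale)
    then have "d\<^sup>2 \<le> (hnorm ip (y - mid))\<^sup>2"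
      using dist_ge \<open>0 \<le> d\<close> by (simp add: power_mono)
    moreover have "(y - m j) + (y - m l) = (y - mid) + (y - mid)"
      unfolding mid_def by (simp add: algebra_simps flip: scale_left_distrib)
    then have "(hnorm ip ((y - m j) + (y - m l)))\<^sup>2 = 4 * (hnorm ip (y - mid))\<^sup>2"
      by (simp only: hnorm_scale_two power_mult_distrib) simp
    ultimately show ?thesis
      using parallelogram[of "y - m j" "y - m l"] hnorm_minus_commute[of "m j" "m l"] by simp
  qed
  show ?thesis
    unfolding hcauchy_def
  proof (intro allI impI)
    fix e :: real
    assume "e > 0"
    have "(\<lambda>j. (hnorm ip (y - m j))\<^sup>2) \<longlonglongrightarrow> d\<^sup>2"
      using lim by (rule tendsto_power)
    then have "\<forall>\<^sub>F j in sequentially. (hnorm ip (y - m j))\<^sup>2 < d\<^sup>2 + e\<^sup>2 / 4"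
      by (rule order_tendstoD) (use \<open>e > 0\<close> in simp)
    then obtain N where N: "\<And>j. j \<ge> N \<Longrightarrow> (hnorm ip (y - m j))\<^sup>2 < d\<^sup>2 + e\<^sup>2 / 4"
      by (auto simp: eventually_sequentially)
    have "hnorm ip (m j - m l) < e" if "j \<ge> N" "l \<ge> N" for j l
    proof (rule power2_less_imp_less)
      show "(hnorm ip (m j - m l))\<^sup>2 < e\<^sup>2"
        using bound[of j l] N[OF \<open>j \<ge> N\<close>] N[OF \<open>l \<ge> N\<close>] by linarith
    qed (use \<open>e > 0\<close> in simp)
    then show "\<exists>N. \<forall>j\<ge>N. \<forall>l\<ge>N. hnorm ip (m j - m l) < e"
      by blast
  qed
qed

lemma nearest_point_exists:
  assumes M: "subspace M"
  shows "\<exists>p\<in>hclosure ip M. \<forall>u\<in>M. hnorm ip (y - p) \<le> hnorm ip (y - p - u)"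
proof -
  define d where "d = (INF u\<in>M. hnorm ip (y - u))"
  have M_ne: "M \<noteq> {}"
    using subspace_0[OF M] by blast
  have bdd: "bdd_below ((\<lambda>u. hnorm ip (y - u)) ` M)"
    by (rule bdd_belowI[of _ 0]) (auto simp: hnorm_nonneg)
  have d_le: "d \<le> hnorm ip (y - u)" if "u \<in> M" for u
    unfolding d_def using bdd that by (rule cINF_lower)
  have "\<exists>u\<in>M. hnorm ip (y - u) < d + inverse (real (Suc j))" for j
    using cINF_less_iff[OF M_ne bdd] unfolding d_def[symmetric]
    by (metis less_add_same_cancel1 positive_imp_inverse_positive of_nat_0_less_iff zero_less_Suc)
  then obtain m where mM: "\<And>j. m j \<in> M"
    and m_lt: "\<And>j. hnorm ip (y - m j) < d + inverse (real (Suc j))"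
    by metis
  have lim: "(\<lambda>j. hnorm ip (y - m j)) \<longlonglongrightarrow> d"
  proof (rule tendsto_sandwich[OF _ _ tendsto_const])
    show "(\<lambda>j. d + inverse (real (Suc j))) \<longlonglongrightarrow> d"
      using tendsto_add[OF tendsto_const LIMSEQ_inverse_real_of_nat, of d] by simp
  qed (intro always_eventually allI d_le mM less_imp_le[OF m_lt])+
  obtain p where p: "hconv ip m p"
    using complete minimizing_sequence_cauchy[OF M mM d_le lim] by blast
  have "hnorm ip (y - p) \<le> hnorm ip (y - p - u)" if "u \<in> M" for u
  proof -
    have "hnorm ip (y - p) = d"
      using LIMSEQ_unique[OF hconv_hnorm_diff[OF p] lim] .
    moreover have "(\<lambda>j. hnorm ip (y - u - m j)) \<longlonglongrightarrow> hnorm ip (y - u - p)"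
      using p by (rule hconv_hnorm_diff)
    moreover have "d \<le> hnorm ip (y - u - m j)" for j
      using d_le[of "m j + u"] subspace_add[OF M mM that] by (simp add: algebra_simps)
    ultimately show ?thesis
      by (simp add: LIMSEQ_le_const algebra_simps)
  qed
  moreover have "p \<in> hclosure ip M"
    using mM p unfolding hclosure_def by blast
  ultimately show ?thesis
    by blast
qed

lemma orthogonal_if_nearest:
  assumes nearest: "\<And>t. hnorm ip u \<le> hnorm ip (u - sc t v)"
  shows "ip u v = 0"
proof -
  define c where "c = ip u v"
  \<comment> \<open>For a small real s > 0, subtracting s c v would shorten u unless c = 0.\<close>
  define s where "s = 1 / ((hnorm ip v)\<^sup>2 + 1)"
  have pos: "0 < (hnorm ip v)\<^sup>2 + 1"
    by (simp add: add_nonneg_pos)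
  then have "s > 0" and s_small: "s * (hnorm ip v)\<^sup>2 < 1"
    by (simp_all add: s_def)
  define t where "t = complex_of_real s * c"
  have "ip u (sc t v) = complex_of_real s * (c * cnj c)"
    by (simp add: ip_scale_right t_def c_def)
  then have "Re (ip u (sc t v)) = s * (cmod c)\<^sup>2"
    by (simp flip: complex_norm_square)
  moreover have "Re (ip (sc t v) (sc t v)) = s\<^sup>2 * (cmod c)\<^sup>2 * (hnorm ip v)\<^sup>2"
    using \<open>s > 0\<close> by (simp add: Re_ip_self_scale t_def norm_mult power_mult_distrib hnorm_power2)
  ultimately have "(hnorm ip (u - sc t v))\<^sup>2
      = (hnorm ip u)\<^sup>2 - 2 * (s * (cmod c)\<^sup>2) + s\<^sup>2 * (cmod c)\<^sup>2 * (hnorm ip v)\<^sup>2"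
    by (simp only: hnorm_power2 Re_ip_self_diff)
  moreover have "(hnorm ip u)\<^sup>2 \<le> (hnorm ip (u - sc t v))\<^sup>2"
    using nearest[of t] hnorm_nonneg by (rule power_mono)
  ultimately have "s * (2 * (cmod c)\<^sup>2) \<le> s * ((cmod c)\<^sup>2 * (s * (hnorm ip v)\<^sup>2))"
    by (simp add: power2_eq_square algebra_simps)
  then have "2 * (cmod c)\<^sup>2 \<le> (cmod c)\<^sup>2 * (s * (hnorm ip v)\<^sup>2)"
    using \<open>s > 0\<close> by simp
  also have "\<dots> \<le> (cmod c)\<^sup>2"
    using s_small by (simp add: mult_left_le)
  finally show ?thesis
    by (simp add: c_def)
qed

lemma orthogonal_projection_exists:
  assumes M: "subspace M"
  shows "\<exists>p\<in>hclosure ip M. \<forall>u\<in>M. ip (y - p) u = 0"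
proof -
  obtain p where "p \<in> hclosure ip M"
    and nearest: "\<And>u. u \<in> M \<Longrightarrow> hnorm ip (y - p) \<le> hnorm ip (y - p - u)"
    using nearest_point_exists[OF M] by blast
  moreover have "ip (y - p) u = 0" if "u \<in> M" for u
    using nearest subspace_scale[OF M that] by (intro orthogonal_if_nearest) blast
  ultimately show ?thesis
    by blast
qed

lemma subspace_if_closed_subspace: "closed_subspace sc ip L \<Longrightarrow> subspace L"
  by (simp add: closed_subspace_def subspace_def)

lemma closed_subspaceI:
  assumes "subspace L" and "\<And>f x. (\<And>k. f k \<in> L) \<Longrightarrow> hconv ip f x \<Longrightarrow> x \<in> L"
  shows "closed_subspace sc ip L"
  using assms unfolding closed_subspace_def subspace_def by blast

lemma closed_subspace_Int:
  "closed_subspace sc ip L \<Longrightarrow> closed_subspace sc ip K \<Longrightarrow> closed_subspace sc ip (L \<inter> K)"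
  unfolding closed_subspace_def by blast

definition is_orth_proj :: "'h set \<Rightarrow> 'h \<Rightarrow> 'h \<Rightarrow> bool" where
  "is_orth_proj L x p \<longleftrightarrow> p \<in> L \<and> (\<forall>l\<in>L. ip (x - p) l = 0)"

lemma orth_proj_exists:
  assumes "closed_subspace sc ip L"
  shows "\<exists>p. is_orth_proj L x p"
  using orthogonal_projection_exists[OF subspace_if_closed_subspace[OF assms]] hclosure_subset[OF assms]
  unfolding is_orth_proj_def by blast

lemma orth_proj_unique:
  assumes L: "subspace L" and "is_orth_proj L x p" and "is_orth_proj L x q"
  shows "p = q"
proof -
  have "p - q \<in> L"
    using assms subspace_diff[OF L] unfolding is_orth_proj_def by blast
  then have "ip (p - q) (p - q) = ip (x - q) (p - q) - ip (x - p) (p - q)"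
    by (simp add: ip_diff_left)
  also have "\<dots> = 0"
    using assms \<open>p - q \<in> L\<close> unfolding is_orth_proj_def by simp
  finally show ?thesis
    by simp
qed

lemma orth_proj_image:
  assumes T: "module_hom sc sc T" and adj: "is_adjoint ip T T'"
    and "T ` L \<subseteq> L" and "T' ` L \<subseteq> L" and "is_orth_proj L x p"
  shows "is_orth_proj L (T x) (T p)"
proof -
  have "ip (T x - T p) l = ip (x - p) (T' l)" for l
    using adj module_hom.diff[OF T] unfolding is_adjoint_def by metis
  then show ?thesis
    using assms unfolding is_orth_proj_def by auto
qed

end

lemma (in module) module_hom_funpow: "module_hom scale scale T \<Longrightarrow> module_hom scale scale (T ^^ k)"
  by (induction k) (simp_all add: module_hom_id module_hom_compose[of scale scale _ scale T])

lemma is_adjoint_funpow: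
  assumes "is_adjoint ip T T'"
  shows "is_adjoint ip (T ^^ k) (T' ^^ k)"
proof (induction k)
  case (Suc k)
  have "ip ((T ^^ Suc k) x) y = ip x ((T' ^^ k) (T' y))" for x y
    using Suc assms unfolding is_adjoint_def by simp
  then have "ip ((T ^^ Suc k) x) y = ip x ((T' ^^ Suc k) y)" for x y
    unfolding funpow_Suc_right comp_def .
  then show ?case
    unfolding is_adjoint_def by blast
qed (simp add: is_adjoint_def)

lemma funpow_image_subset: "T ` L \<subseteq> L \<Longrightarrow> (T ^^ k) ` L \<subseteq> L"
  by (induction k) auto

section \<open>An isometry and its adjoint\<close>

locale isometry_adjoint = complex_hilbert sc ip
  for sc :: "complex \<Rightarrow> 'h::ab_group_add \<Rightarrow> 'h" and ip +
  fixes V W :: "'h \<Rightarrow> 'h"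
  assumes isometry: "isometry sc ip V" and adjoint: "is_adjoint ip V W"
begin

sublocale V: module_hom sc sc V
  using isometry module_axioms unfolding isometry_def hlinear_def module_hom_iff by blast

lemma hnorm_V [simp]: "hnorm ip (V x) = hnorm ip x"
  using isometry unfolding isometry_def by blast

lemma ip_V_left: "ip (V x) y = ip x (W y)"
  using adjoint unfolding is_adjoint_def by blast

lemma ip_W_left: "ip (W y) x = ip y (V x)"
  by (metis ip_V_left ip_commute)

sublocale W: module_hom sc sc W
proof -
  have "W (x + y) = W x + W y" "W (sc a x) = sc a (W x)" for a x y
    by (rule ip_ext; simp add: ip_add_right ip_scale_right flip: ip_V_left)+
  then show "module_hom sc sc W"
    using module_axioms unfolding module_hom_iff by blast
qed

lemma Re_ip_V_self [simp]: "Re (ip (V x) (V x)) = Re (ip x x)"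
  by (metis hnorm_V hnorm_power2)

lemma Re_ip_W_self_le: "Re (ip (W x) (W x)) \<le> Re (ip x x)"
proof -
  have "0 \<le> Re (ip (x - V (W x)) (x - V (W x)))"
    by (rule Re_ip_self_nonneg)
  also have "\<dots> = Re (ip x x) - Re (ip (W x) (W x))"
    by (simp add: Re_ip_self_diff ip_W_left)
  finally show ?thesis
    by simp
qed

lemma hnorm_W_le: "hnorm ip (W x) \<le> hnorm ip x"
  unfolding hnorm_def by (rule real_sqrt_le_mono) (rule Re_ip_W_self_le)

lemma W_V [simp]: "W (V x) = x"
proof -
  have "Re (ip (W (V x) - x) (W (V x) - x)) = Re (ip (W (V x)) (W (V x))) - Re (ip x x)"
    by (simp add: Re_ip_self_diff ip_W_left[of "V x" x])
  also have "\<dots> \<le> 0"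
    using Re_ip_W_self_le[of "V x"] by simp
  finally have "Re (ip (W (V x) - x) (W (V x) - x)) = 0"
    using Re_ip_self_nonneg by (simp add: order_antisym)
  then show ?thesis
    using ip_self_of_real[of "W (V x) - x"] by simp
qed

lemma ip_V_V [simp]: "ip (V x) (V y) = ip x y"
  by (simp add: ip_V_left)

lemma is_adjoint_W: "is_adjoint ip W V"
  using ip_W_left unfolding is_adjoint_def by blast

lemma module_hom_V_pow: "module_hom sc sc (V ^^ k)"
  by (rule module_hom_funpow) (rule V.module_hom_axioms)

lemma module_hom_W_pow: "module_hom sc sc (W ^^ k)"
  by (rule module_hom_funpow) (rule W.module_hom_axioms)

lemma W_pow_V_pow [simp]: "(W ^^ k) ((V ^^ k) x) = x"
proof (induction k)
  case (Suc k)
  then show ?case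
    by (subst funpow_Suc_right) simp
qed simp

lemma hnorm_V_pow [simp]: "hnorm ip ((V ^^ k) x) = hnorm ip x"
  by (induction k) simp_all

lemma hnorm_W_pow_le: "hnorm ip ((W ^^ k) x) \<le> hnorm ip x"
  by (induction k) (auto intro: order_trans[OF hnorm_W_le])

section \<open>The unitary part and the wandering subspaces\<close>

definition range_proj :: "nat \<Rightarrow> 'h \<Rightarrow> 'h" where
  "range_proj k x = (V ^^ k) ((W ^^ k) x)"

lemma module_hom_range_proj: "module_hom sc sc (range_proj k)"
proof -
  have "range_proj k = (V ^^ k) \<circ> (W ^^ k)"
    by (simp add: fun_eq_iff range_proj_def)
  then show ?thesis
    using module_hom_compose[OF module_hom_W_pow module_hom_V_pow] by simp
qed

lemma hnorm_range_proj_le: "hnorm ip (range_proj k x) \<le> hnorm ip x"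
  by (simp add: range_proj_def hnorm_W_pow_le)

lemma range_proj_0 [simp]: "range_proj 0 x = x"
  by (simp add: range_proj_def)

lemma range_proj_Suc: "range_proj (Suc k) x = V (range_proj k (W x))"
  unfolding range_proj_def funpow_Suc_right[of k W] by simp

lemma H_uni_iff_range_proj: "u \<in> H_uni V \<longleftrightarrow> (\<forall>k. range_proj k u = u)"
proof
  assume "u \<in> H_uni V"
  show "\<forall>k. range_proj k u = u"
  proof
    fix k
    obtain z where "u = (V ^^ k) z"
      using \<open>u \<in> H_uni V\<close> unfolding H_uni_def by blast
    then show "range_proj k u = u"
      by (simp add: range_proj_def)
  qed
next
  assume fixed: "\<forall>k. range_proj k u = u"
  show "u \<in> H_uni V"
    unfolding H_uni_def
  proof
    fix k
    have "u = (V ^^ k) ((W ^^ k) u)"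
      using fixed by (simp add: range_proj_def)
    then show "u \<in> range (V ^^ k)"
      by blast
  qed
qed

lemma closed_subspace_H_uni: "closed_subspace sc ip (H_uni V)"
proof (rule closed_subspaceI)
  show "subspace (H_uni V)"
    using module_hom.add[OF module_hom_range_proj] module_hom.scale[OF module_hom_range_proj]
      module_hom.zero[OF module_hom_range_proj]
    by (intro subspaceI) (simp_all add: H_uni_iff_range_proj)
next
  fix f x
  assume f: "\<And>j. f j \<in> H_uni V" and "hconv ip f x"
  have "range_proj k x = x" for k
  proof (rule hconv_unique)
    show "hconv ip f x"
      by fact
    have "hconv ip (\<lambda>j. range_proj k (f j)) (range_proj k x)"
      by (rule hconv_lipschitz[OF \<open>hconv ip f x\<close>, where C = 1])
        (simp add: hnorm_range_proj_le flip: module_hom.diff[OF module_hom_range_proj])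
    then show "hconv ip f (range_proj k x)"
      using f by (simp add: H_uni_iff_range_proj)
  qed
  then show "x \<in> H_uni V"
    by (simp add: H_uni_iff_range_proj)
qed

lemma V_W_H_uni: "u \<in> H_uni V \<Longrightarrow> V (W u) = u"
  using H_uni_iff_range_proj[THEN iffD1, rule_format, of u 1] by (simp add: range_proj_def)

lemma W_H_uni:
  assumes "u \<in> H_uni V"
  shows "W u \<in> H_uni V"
proof -
  have "range_proj k (W u) = W u" for k
  proof -
    have "range_proj k (W u) = W (range_proj (Suc k) u)"
      by (simp add: range_proj_Suc)
    then show ?thesis
      using assms by (simp add: H_uni_iff_range_proj)
  qed
  then show ?thesis
    by (simp add: H_uni_iff_range_proj)
qed

lemma V_H_uni:
  assumes "u \<in> H_uni V"
  shows "V u \<in> H_uni V"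
proof -
  have "range_proj k (V u) = V u" for k
    using assms by (cases k) (simp_all add: range_proj_Suc H_uni_iff_range_proj)
  then show ?thesis
    by (simp add: H_uni_iff_range_proj)
qed

lemma pure_Int_H_uni:
  assumes L: "reducing sc ip V W L" and pure: "pure_on sc ip V L"
  shows "L \<inter> H_uni V = {0}"
proof -
  have VL: "V ` L \<subseteq> L" and WL: "W ` L \<subseteq> L"
    using L unfolding reducing_def by blast+
  have "closed_subspace sc ip (L \<inter> H_uni V)"
    using L closed_subspace_H_uni unfolding reducing_def by (blast intro: closed_subspace_Int)
  moreover have "V ` (L \<inter> H_uni V) = L \<inter> H_uni V"
  proof
    show "V ` (L \<inter> H_uni V) \<subseteq> L \<inter> H_uni V"
      using VL V_H_uni by blast
    show "L \<inter> H_uni V \<subseteq> V ` (L \<inter> H_uni V)"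
    proof
      fix u
      assume "u \<in> L \<inter> H_uni V"
      then have "W u \<in> L \<inter> H_uni V" and "u = V (W u)"
        using WL W_H_uni V_W_H_uni by auto
      then show "u \<in> V ` (L \<inter> H_uni V)"
        by blast
    qed
  qed
  ultimately show ?thesis
    using pure unfolding pure_on_def unitary_on_def by blast
qed

lemma H_uni_orthogonal_pure:
  assumes L: "reducing sc ip V W L" and pure: "pure_on sc ip V L"
    and u: "u \<in> H_uni V" and l: "l \<in> L"
  shows "ip u l = 0"
proof -
  have L_closed: "closed_subspace sc ip L" and VL: "V ` L \<subseteq> L" and WL: "W ` L \<subseteq> L"
    using L unfolding reducing_def by blast+
  obtain p where p: "is_orth_proj L u p"
    using orth_proj_exists[OF L_closed] by blast
  \<comment> \<open>Projecting onto the reducing subspace L commutes with V and W, hence with range_proj.\<close>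
  have "range_proj k p = p" for k
  proof (rule orth_proj_unique[OF subspace_if_closed_subspace[OF L_closed]])
    have "is_orth_proj L ((W ^^ k) u) ((W ^^ k) p)"
      by (rule orth_proj_image[OF module_hom_W_pow is_adjoint_funpow[OF is_adjoint_W]
            funpow_image_subset[OF WL] funpow_image_subset[OF VL] p])
    then have "is_orth_proj L (range_proj k u) (range_proj k p)"
      unfolding range_proj_def
      by (rule orth_proj_image[OF module_hom_V_pow is_adjoint_funpow[OF adjoint]
            funpow_image_subset[OF VL] funpow_image_subset[OF WL]])
    then show "is_orth_proj L u (range_proj k p)"
      using u by (simp add: H_uni_iff_range_proj)
  qed (rule p)
  then have "p \<in> L \<inter> H_uni V"
    using p unfolding is_orth_proj_def by (simp add: H_uni_iff_range_proj)
  then have "p = 0"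
    using pure_Int_H_uni[OF L pure] by blast
  then show ?thesis
    using p l unfolding is_orth_proj_def by simp
qed

definition wandering_sums :: "'h set" where
  "wandering_sums = {x. \<exists>N g. (\<forall>k<N. g k \<in> (V ^^ k) ` {y. W y = 0}) \<and> x = (\<Sum>k<N. g k)}"

lemma H_iso_eq: "H_iso ip V W = hclosure ip wandering_sums"
  by (simp add: H_iso_def wandering_sums_def)

lemma subspace_wandering: "subspace ((V ^^ k) ` {y. W y = 0})"
  by (rule module_hom.subspace_image[OF module_hom_V_pow W.subspace_kernel])

lemma wandering_sums_padded:
  assumes "x \<in> wandering_sums"
  obtains g N where "\<And>k. g k \<in> (V ^^ k) ` {y. W y = 0}" and "\<And>N'. N \<le> N' \<Longrightarrow> x = (\<Sum>k<N'. g k)"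
proof -
  obtain N g where g: "\<forall>k<N. g k \<in> (V ^^ k) ` {y. W y = 0}" and x: "x = (\<Sum>k<N. g k)"
    using assms unfolding wandering_sums_def by blast
  define g' where "g' k = (if k < N then g k else 0)" for k
  have "g' k \<in> (V ^^ k) ` {y. W y = 0}" for k
    using g subspace_0[OF subspace_wandering] by (simp add: g'_def)
  moreover have "x = (\<Sum>k<N'. g' k)" if "N \<le> N'" for N'
  proof -
    have "(\<Sum>k<N'. g' k) = (\<Sum>k<N. g' k)"
      by (rule sum.mono_neutral_right) (use that in \<open>auto simp: g'_def\<close>)
    then show ?thesis
      by (simp add: x g'_def)
  qed
  ultimately show ?thesis
    by (rule that)
qed

lemma wandering_sumsI: "(\<And>k. g k \<in> (V ^^ k) ` {y. W y = 0}) \<Longrightarrow> (\<Sum>k<N. g k) \<in> wandering_sums"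
  unfolding wandering_sums_def by blast

lemma subspace_wandering_sums: "subspace wandering_sums"
proof (rule subspaceI)
  show "0 \<in> wandering_sums"
    unfolding wandering_sums_def by (intro CollectI exI[of _ 0]) simp
next
  fix x y
  assume "x \<in> wandering_sums" "y \<in> wandering_sums"
  then obtain g N h M where g: "\<And>k. g k \<in> (V ^^ k) ` {y. W y = 0}" and x: "x = (\<Sum>k<max N M. g k)"
    and h: "\<And>k. h k \<in> (V ^^ k) ` {y. W y = 0}" and y: "y = (\<Sum>k<max N M. h k)"
    by (metis max.cobounded1 max.cobounded2 wandering_sums_padded)
  have "x + y = (\<Sum>k<max N M. g k + h k)"
    by (simp add: x y sum.distrib)
  then show "x + y \<in> wandering_sums"
    using g h subspace_add[OF subspace_wandering] by (simp add: wandering_sumsI)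
next
  fix c x
  assume "x \<in> wandering_sums"
  then obtain g N where g: "\<And>k. g k \<in> (V ^^ k) ` {y. W y = 0}" and x: "x = (\<Sum>k<N. g k)"
    by (metis order_refl wandering_sums_padded)
  have "sc c x = (\<Sum>k<N. sc c (g k))"
    by (simp add: x scale_sum_right)
  then show "sc c x \<in> wandering_sums"
    using g subspace_scale[OF subspace_wandering] by (simp add: wandering_sumsI)
qed

lemma V_wandering_sums:
  assumes "x \<in> wandering_sums"
  shows "V x \<in> wandering_sums"
proof -
  obtain g N where g: "\<And>k. g k \<in> (V ^^ k) ` {y. W y = 0}" and x: "x = (\<Sum>k<N. g k)"
    using assms by (metis order_refl wandering_sums_padded)
  define g' where "g' k = (case k of 0 \<Rightarrow> 0 | Suc j \<Rightarrow> V (g j))" for k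
  have "g' k \<in> (V ^^ k) ` {y. W y = 0}" for k
  proof (cases k)
    case 0
    then show ?thesis
      using subspace_0[OF subspace_wandering] by (simp add: g'_def)
  next
    case (Suc j)
    then show ?thesis
      using g[of j] by (auto simp: g'_def)
  qed
  moreover have "V x = (\<Sum>k<Suc N. g' k)"
    by (simp only: sum.lessThan_Suc_shift) (simp add: g'_def x V.sum)
  ultimately show ?thesis
    by (metis wandering_sumsI)
qed

lemma ker_W_wandering_sums: "W w = 0 \<Longrightarrow> w \<in> wandering_sums"
  unfolding wandering_sums_def by (intro CollectI exI[of _ 1] exI[of _ "\<lambda>k. w"]) auto

lemma orthogonal_wandering_sums_imp_H_uni:
  assumes "\<And>m. m \<in> wandering_sums \<Longrightarrow> ip q m = 0"
  shows "q \<in> H_uni V"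
proof -
  have "\<forall>q. (\<forall>m\<in>wandering_sums. ip q m = 0) \<longrightarrow> range_proj k q = q" for k
  proof (induction k)
    case (Suc k)
    show ?case
    proof (intro allI impI)
      fix q
      assume q: "\<forall>m\<in>wandering_sums. ip q m = 0"
      then have "\<forall>m\<in>wandering_sums. ip (W q) m = 0"
        using V_wandering_sums by (simp add: ip_W_left)
      then have "range_proj k (W q) = W q"
        using Suc.IH by blast
      moreover have "V (W q) = q"
      proof -
        \<comment> \<open>q - V (W q) lies in ker W and is orthogonal to both q and V (W q).\<close>
        let ?d = "q - V (W q)"
        have "W ?d = 0"
          by (simp add: W.diff)
        then have "ip q ?d = 0" and "ip (V (W q)) ?d = 0"
          using q ker_W_wandering_sums by (simp_all add: ip_V_left)
        then have "ip ?d ?d = 0"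
          by (simp add: ip_diff_left)
        then show ?thesis
          by simp
      qed
      ultimately show "range_proj (Suc k) q = q"
        by (simp add: range_proj_Suc)
    qed
  qed simp
  then show ?thesis
    using assms by (simp add: H_uni_iff_range_proj)
qed

lemma pure_subset_H_iso:
  assumes L: "reducing sc ip V W L" and pure: "pure_on sc ip V L"
  shows "L \<subseteq> H_iso ip V W"
proof
  fix y
  assume "y \<in> L"
  obtain p where p: "p \<in> hclosure ip wandering_sums" and orth: "\<forall>m\<in>wandering_sums. ip (y - p) m = 0"
    using orthogonal_projection_exists[OF subspace_wandering_sums] by blast
  have "y - p \<in> H_uni V"
    using orth by (blast intro: orthogonal_wandering_sums_imp_H_uni)
  then have "ip (y - p) y = 0"
    using H_uni_orthogonal_pure[OF L pure _ \<open>y \<in> L\<close>] by blast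
  moreover have "ip p (y - p) = 0"
  proof (rule hclosure_orthogonal[OF _ p])
    show "ip m (y - p) = 0" if "m \<in> wandering_sums" for m
      using orth that ip_commute[of "y - p" m] by simp
  qed
  ultimately have "ip (y - p) (y - p) = 0"
    using ip_commute[of p "y - p"] by (simp add: ip_diff_right)
  then show "y \<in> H_iso ip V W"
    using p by (simp add: H_iso_eq)
qed

lemma ip_V_pow_V_pow [simp]: "ip ((V ^^ k) x) ((V ^^ k) y) = ip x y"
  by (induction k) simp_all

lemma wandering_sums_orthogonal_H_uni:
  assumes m: "m \<in> wandering_sums" and u: "u \<in> H_uni V"
  shows "ip m u = 0"
proof -
  have wandering_orth: "ip g u = 0" if g: "g \<in> (V ^^ k) ` {y. W y = 0}" for g k
  proof -
    obtain w where "W w = 0" and "g = (V ^^ k) w"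
      using g by blast
    moreover have "u = (V ^^ k) (V ((W ^^ Suc k) u))"
      using u unfolding H_uni_iff_range_proj range_proj_def
      by (metis comp_apply funpow_Suc_right)
    ultimately show ?thesis
      by (metis ip_V_pow_V_pow ip_W_left ip_zero_left)
  qed
  obtain g N where g: "\<And>k. g k \<in> (V ^^ k) ` {y. W y = 0}" and "m = (\<Sum>k<N. g k)"
    using m by (metis order_refl wandering_sums_padded)
  then show ?thesis
    by (simp add: ip_sum_left wandering_orth[OF g])
qed

lemma H_iso_orthogonal_H_uni: "x \<in> H_iso ip V W \<Longrightarrow> u \<in> H_uni V \<Longrightarrow> ip x u = 0"
  unfolding H_iso_eq by (rule hclosure_orthogonal[OF wandering_sums_orthogonal_H_uni])

end

section \<open>Tuples of isometries\<close>

lemma unitary_subset_H_uni: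
  assumes "unitary_on S L"
  shows "L \<subseteq> H_uni S"
proof -
  have "L \<subseteq> (S ^^ k) ` L" for k
  proof (induction k)
    case (Suc k)
    have "L = S ` L"
      using assms unfolding unitary_on_def by simp
    also have "\<dots> \<subseteq> S ` ((S ^^ k) ` L)"
      using Suc by (rule image_mono)
    finally show ?case
      by (simp add: image_comp)
  qed simp
  then show ?thesis
    unfolding H_uni_def by blast
qed

locale isometry_family = complex_hilbert sc ip
  for sc :: "complex \<Rightarrow> 'h::ab_group_add \<Rightarrow> 'h" and ip +
  fixes n :: nat and V W :: "nat \<Rightarrow> 'h \<Rightarrow> 'h"
  assumes member: "i \<in> {1..n} \<Longrightarrow> isometry_adjoint sc ip (V i) (W i)"
begin

lemma type_A_subspace_subset_H_A:
  assumes A: "A \<subseteq> {1..n}" and L: "type_A_subspace sc ip n V W A L"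
  shows "L \<subseteq> H_A ip n V W A"
proof -
  have "L \<subseteq> H_iso ip (V i) (W i)" if "i \<in> A" for i
    using L A that isometry_adjoint.pure_subset_H_iso[OF member]
    unfolding type_A_subspace_def by blast
  moreover have "L \<subseteq> H_uni (V i)" if "i \<in> {1..n} - A" for i
    using L that unitary_subset_H_uni unfolding type_A_subspace_def by blast
  ultimately show ?thesis
    unfolding H_A_def by blast
qed

lemma H_A_orthogonal:
  assumes "A \<subseteq> {1..n}" and "B \<subseteq> {1..n}" and "A \<noteq> B"
    and x: "x \<in> H_A ip n V W A" and y: "y \<in> H_A ip n V W B"
  shows "ip x y = 0"
proof -
  obtain i where i: "i \<in> {1..n}" and "i \<in> A \<and> i \<notin> B \<or> i \<in> B \<and> i \<notin> A"
    using assms(1-3) by blast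
  then consider "x \<in> H_iso ip (V i) (W i)" "y \<in> H_uni (V i)"
    | "y \<in> H_iso ip (V i) (W i)" "x \<in> H_uni (V i)"
    using x y unfolding H_A_def by blast
  then show ?thesis
  proof cases
    case 1
    then show ?thesis
      by (rule isometry_adjoint.H_iso_orthogonal_H_uni[OF member[OF i]])
  next
    case 2
    then have "ip y x = 0"
      by (rule isometry_adjoint.H_iso_orthogonal_H_uni[OF member[OF i]])
    then show ?thesis
      using ip_commute[of x y] by simp
  qed
qed

lemma type_A_subspaces_orthogonal:
  assumes "A \<subseteq> {1..n}" and "B \<subseteq> {1..n}" and "A \<noteq> B"
    and "type_A_subspace sc ip n V W A LA" and "type_A_subspace sc ip n V W B LB"
  shows "horth ip LA LB"
  using assms H_A_orthogonal type_A_subspace_subset_H_A unfolding horth_def by (meson subsetD)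

lemma type_A_decomposition_eq_H_A:
  assumes L: "\<And>B. B \<in> Pow {1..n} \<Longrightarrow> type_A_subspace sc ip n V W B (L B)"
    and decomp: "\<And>x. \<exists>f. (\<forall>B\<in>Pow {1..n}. f B \<in> L B) \<and> x = (\<Sum>B\<in>Pow {1..n}. f B)"
    and A: "A \<in> Pow {1..n}"
  shows "L A = H_A ip n V W A"
proof
  show "L A \<subseteq> H_A ip n V W A"
    using A L by (simp add: type_A_subspace_subset_H_A)
  show "H_A ip n V W A \<subseteq> L A"
  proof
    fix x
    assume x: "x \<in> H_A ip n V W A"
    obtain f where f: "\<And>B. B \<in> Pow {1..n} \<Longrightarrow> f B \<in> H_A ip n V W B \<and> f B \<in> L B"
      and x_eq: "x = (\<Sum>B\<in>Pow {1..n}. f B)"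
      using decomp[of x] L type_A_subspace_subset_H_A by blast
    have "f B = 0" if B: "B \<in> Pow {1..n}" "B \<noteq> A" for B
    proof -
      have "ip (f B) (f B) = ip x (f B)"
        unfolding x_eq using B f H_A_orthogonal
        by (subst ip_sum_orthogonal_component) auto
      also have "\<dots> = 0"
        using A B f x H_A_orthogonal by blast
      finally show ?thesis
        by simp
    qed
    then have "x = f A"
      unfolding x_eq using A by (simp add: sum.remove)
    then show "x \<in> L A"
      using A f by blast
  qed
qed

end

theorem proposition3p5:
  fixes sc :: "complex \<Rightarrow> 'h::ab_group_add \<Rightarrow> 'h" and ip :: "'h \<Rightarrow> 'h \<Rightarrow> complex"
    and n :: nat and z :: "nat \<Rightarrow> nat \<Rightarrow> complex" and V W :: "nat \<Rightarrow> 'h \<Rightarrow> 'h"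
  assumes "hilbert_space sc ip" and "n \<ge> 1"
    and "doubly_noncommuting sc ip n z V W"
  shows "(\<forall>A B LA LB. A \<subseteq> {1..n} \<and> B \<subseteq> {1..n} \<and> A \<noteq> B \<and>
            type_A_subspace sc ip n V W A LA \<and> type_A_subspace sc ip n V W B LB
            \<longrightarrow> horth ip LA LB)
       \<and> (\<forall>L :: nat set \<Rightarrow> 'h set.
            (\<forall>A\<in>Pow {1..n}. type_A_subspace sc ip n V W A (L A)) \<and>
            (\<forall>x. \<exists>f. (\<forall>A\<in>Pow {1..n}. f A \<in> L A) \<and> x = (\<Sum>A\<in>Pow {1..n}. f A)) \<and>
            (\<forall>f. (\<forall>A\<in>Pow {1..n}. f A \<in> L A) \<and> (\<Sum>A\<in>Pow {1..n}. f A) = 0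
                 \<longrightarrow> (\<forall>A\<in>Pow {1..n}. f A = 0))
            \<longrightarrow> (\<forall>A\<in>Pow {1..n}. L A = H_A ip n V W A))"
proof -
  have "isometry_adjoint sc ip (V i) (W i)" if "i \<in> {1..n}" for i
    using assms(1,3) that unfolding doubly_noncommuting_def isometry_adjoint_def
      isometry_adjoint_axioms_def complex_hilbert_def by blast
  then interpret isometry_family sc ip n V W
    using assms(1) by (simp add: isometry_family_def isometry_family_axioms_def complex_hilbert_def)
  show ?thesis
  proof (intro conjI allI impI ballI; elim conjE)
    show "horth ip LA LB"
      if "A \<subseteq> {1..n}" "B \<subseteq> {1..n}" "A \<noteq> B"
        "type_A_subspace sc ip n V W A LA" "type_A_subspace sc ip n V W B LB" for A B LA LB
      using that by (rule type_A_subspaces_orthogonal)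
    show "L A = H_A ip n V W A"
      if "\<forall>A\<in>Pow {1..n}. type_A_subspace sc ip n V W A (L A)"
        and "\<forall>x. \<exists>f. (\<forall>A\<in>Pow {1..n}. f A \<in> L A) \<and> x = (\<Sum>A\<in>Pow {1..n}. f A)"
        and "A \<in> Pow {1..n}" for L A
      using that by (intro type_A_decomposition_eq_H_A) blast+
  qed
qed

end
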